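(* Let $G$ be a connected graph of order $n$ with $\alpha(G)=n-2$. Then $m_G[0,n-\alpha(G)]=\alpha(G)$ (i.e. $m_G[0,2]=n-2$) if and only if $G$ is isomorphic to one of the following, where $p\ge r\ge 0$ and $q\ge 0$ are integers with $n=p+q+r+2$: (1) $B(p,q,r)$ with $q\ge 1$ and $p+q+r\ge 3$; (2) $B'(p,0,r)$ with $pr\ge 2$; (3) $B'(p,q,r)$ with $q\ge 1$.
   Context: Graphs are finite and simple; $\alpha(G)$ is the independence number. $L(G)=D(G)-A(G)$ is the Laplacian matrix; for an interval $I$, $m_G I$ is the number of Laplacian eigenvalues of $G$ (with multiplicity) in $I$. For integers $p,q,r\ge 0$, the binary star graph $B(p,q,r)$ is the simple graph on $p+q+r+2$ vertices $u,v,w_1,\dots,w_q,u_1,\dots,u_p,v_1,\dots,v_r$ whose edges are $uw_i$ and $vw_i$ for $1\le i\le q$, $uu_j$ for $1\le j\le p$, and $vv_k$ for $1\le k\le r$ (so $u,v$ nonadjacent). $B'(p,q,r)$ is obtained from $B(p,q,r)$ by adding the edge $uv$. The convention $p\ge r$ is imposed (the graphs are symmetric in $p$ and $r$). *)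

theory Defs
  imports "Jordan_Normal_Form.Char_Poly"
begin

definition sgraph :: "nat \<Rightarrow> (nat \<Rightarrow> nat \<Rightarrow> bool) \<Rightarrow> bool" where
  "sgraph n A \<longleftrightarrow> (\<forall>i j. A i j \<longrightarrow> i < n \<and> j < n) \<and> (\<forall>i j. A i j \<longrightarrow> A j i) \<and> (\<forall>i. \<not> A i i)"

definition connected_graph :: "nat \<Rightarrow> (nat \<Rightarrow> nat \<Rightarrow> bool) \<Rightarrow> bool" where
  "connected_graph n A \<longleftrightarrow> (\<forall>i<n. \<forall>j<n. A\<^sup>*\<^sup>* i j)"

definition independent_set :: "nat \<Rightarrow> (nat \<Rightarrow> nat \<Rightarrow> bool) \<Rightarrow> nat set \<Rightarrow> bool" where
  "independent_set n A S \<longleftrightarrow> S \<subseteq> {..<n} \<and> (\<forall>x\<in>S. \<forall>y\<in>S. \<not> A x y)"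

definition indep_num :: "nat \<Rightarrow> (nat \<Rightarrow> nat \<Rightarrow> bool) \<Rightarrow> nat" where
  "indep_num n A = Max {card S | S. independent_set n A S}"

definition degree :: "nat \<Rightarrow> (nat \<Rightarrow> nat \<Rightarrow> bool) \<Rightarrow> nat \<Rightarrow> nat" where
  "degree n A i = card {k. k < n \<and> A i k}"

definition laplacian :: "nat \<Rightarrow> (nat \<Rightarrow> nat \<Rightarrow> bool) \<Rightarrow> real mat" where
  "laplacian n A = mat n n (\<lambda>(i, j). (if i = j then real (degree n A i) else 0) - (if A i j then 1 else 0))"

definition lap_mult_closed :: "nat \<Rightarrow> (nat \<Rightarrow> nat \<Rightarrow> bool) \<Rightarrow> real \<Rightarrow> real \<Rightarrow> nat" where
  "lap_mult_closed n A a b =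
     (\<Sum>x\<in>{x. poly (char_poly (laplacian n A)) x = 0 \<and> a \<le> x \<and> x \<le> b}.
        order x (char_poly (laplacian n A)))"

definition graph_iso :: "nat \<Rightarrow> (nat \<Rightarrow> nat \<Rightarrow> bool) \<Rightarrow> (nat \<Rightarrow> nat \<Rightarrow> bool) \<Rightarrow> bool" where
  "graph_iso n A B \<longleftrightarrow> (\<exists>f. bij_betw f {..<n} {..<n} \<and> (\<forall>i<n. \<forall>j<n. A i j \<longleftrightarrow> B (f i) (f j)))"

text \<open>Binary star: u = 0, v = 1, w_1..w_q = 2..q+1, u_1..u_p = q+2..q+p+1,
  v_1..v_r = q+p+2..q+p+r+1. If c then the edge uv is added (B'(p,q,r)).\<close>
definition bstar_dir :: "nat \<Rightarrow> nat \<Rightarrow> nat \<Rightarrow> bool \<Rightarrow> nat \<Rightarrow> nat \<Rightarrow> bool" where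
  "bstar_dir p q r c x y \<longleftrightarrow>
     (x = 0 \<and> 2 \<le> y \<and> y < q + 2) \<or>
     (x = 1 \<and> 2 \<le> y \<and> y < q + 2) \<or>
     (x = 0 \<and> q + 2 \<le> y \<and> y < q + p + 2) \<or>
     (x = 1 \<and> q + p + 2 \<le> y \<and> y < q + p + r + 2) \<or>
     (c \<and> x = 0 \<and> y = 1)"

definition binary_star :: "nat \<Rightarrow> nat \<Rightarrow> nat \<Rightarrow> bool \<Rightarrow> nat \<Rightarrow> nat \<Rightarrow> bool" where
  "binary_star p q r c x y \<longleftrightarrow> bstar_dir p q r c x y \<or> bstar_dir p q r c y x"

end

theory Submission
  imports Defs
begin

text \<open>A maximum independent set misses exactly two vertices \<open>u, v\<close>. By connectivity every
  other vertex is adjacent to \<open>u\<close> or \<open>v\<close>, and \<open>u, v\<close> are adjacent or have a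
  common neighbour, so \<open>G\<close> is a binary star \<open>B(p, q, r)\<close> with \<open>q \<ge> 1\<close> or a
  \<open>B'(p, q, r)\<close>. Taking the Schur complement of the (diagonal) leaf block of \<open>t I - L\<close>
  shows that the characteristic polynomial times \<open>(t - 1)\<^sup>2 (t - 2)\<close> equals
  \<open>t (t - 1)\<^bsup>p+r\<^esup> (t - 2)\<^bsup>q\<^esup> H(t)\<close> for an explicit quartic \<open>H\<close>, so
  \<open>m[0, 2] = p + q + r - 2 + (number of roots of H in [0, 2])\<close>. The condition
  \<open>m[0, 2] = n - 2\<close> thus says that \<open>H\<close> has exactly two roots in \<open>[0, 2]\<close>, which is
  decided by sign changes of \<open>H\<close> at a few integer points, or by factorising \<open>H\<close> in the
  degenerate cases.\<close>

section \<open>Real polynomials and their roots in an interval\<close>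

definition root_count :: "real \<Rightarrow> real \<Rightarrow> real poly \<Rightarrow> nat" where
  "root_count a b f = size (filter_mset (\<lambda>x. a \<le> x \<and> x \<le> b) (proots f))"

lemma sum_order_eq_root_count:
  assumes "f \<noteq> 0"
  shows "(\<Sum>x\<in>{x. poly f x = 0 \<and> a \<le> x \<and> x \<le> b}. order x f) = root_count a b f"
proof -
  let ?M = "filter_mset (\<lambda>x. a \<le> x \<and> x \<le> b) (proots f)"
  have "set_mset ?M = {x. poly f x = 0 \<and> a \<le> x \<and> x \<le> b}" using assms by auto
  moreover have "count ?M x = order x f" if "x \<in># ?M" for x using that assms by auto
  ultimately show ?thesis
    unfolding root_count_def size_multiset_overloaded_eq by (metis (no_types, lifting) sum.cong)
qed

lemma root_count_mult:
  "f \<noteq> 0 \<Longrightarrow> g \<noteq> 0 \<Longrightarrow> root_count a b (f * g) = root_count a b f + root_count a b g"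
  unfolding root_count_def by (simp add: proots_mult)

lemma root_count_power: "root_count a b (f ^ k) = k * root_count a b f"
  unfolding root_count_def proots_power by (induction k) auto

lemma root_count_linear: "root_count a b [:-c, 1:] = (if a \<le> c \<and> c \<le> b then 1 else 0)"
  using proots_linear_factor[of "-c"] by (simp add: root_count_def)

lemma root_count_linear_mult:
  "g \<noteq> 0 \<Longrightarrow> root_count a b ([:-c, 1:] * g) = (if a \<le> c \<and> c \<le> b then 1 else 0) + root_count a b g"
  by (subst root_count_mult) (auto simp: root_count_linear)

lemma card_roots_le_size_filter:
  fixes f :: "real poly"
  assumes "f \<noteq> 0" and "S \<subseteq> {x. poly f x = 0 \<and> P x}"
  shows "card S \<le> size (filter_mset P (proots f))"
proof -
  let ?M = "filter_mset P (proots f)"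
  have "S \<subseteq> set_mset ?M" using assms by auto
  hence "card S \<le> card (set_mset ?M)" by (rule card_mono[OF finite_set_mset])
  also have "\<dots> = size (mset_set (set_mset ?M))" by simp
  also have "\<dots> \<le> size ?M" by (rule size_mset_mono[OF mset_set_set_mset_msubset])
  finally show ?thesis .
qed

lemma card_le_root_count:
  "f \<noteq> 0 \<Longrightarrow> S \<subseteq> {x. poly f x = 0 \<and> a \<le> x \<and> x \<le> b} \<Longrightarrow> card S \<le> root_count a b f"
  unfolding root_count_def by (rule card_roots_le_size_filter)

lemma root_count_eq_card:
  fixes f :: "real poly"
  assumes "f \<noteq> 0"
    and inside: "S \<subseteq> {x. poly f x = 0 \<and> a \<le> x \<and> x \<le> b}"
    and outside: "T \<subseteq> {x. poly f x = 0 \<and> \<not> (a \<le> x \<and> x \<le> b)}"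
    and "card S + card T = Polynomial.degree f"
  shows "root_count a b f = card S"
proof -
  let ?P = "\<lambda>x::real. a \<le> x \<and> x \<le> b"
  have "card S \<le> root_count a b f" using card_le_root_count[OF assms(1) inside] .
  moreover have "card T \<le> size (filter_mset (\<lambda>x. \<not> ?P x) (proots f))"
    by (rule card_roots_le_size_filter[OF assms(1) outside])
  moreover have "size (filter_mset ?P (proots f)) + size (filter_mset (\<lambda>x. \<not> ?P x) (proots f))
      \<le> Polynomial.degree f"
    using size_proots_le[of f] by (metis multiset_partition size_union)
  ultimately show ?thesis using assms(4) unfolding root_count_def by linarith
qed

lemma root_count_quartic_sign_changes:
  fixes f :: "real poly"
  assumes "Polynomial.degree f = 4" and "a \<le> x" "x < y" "y < b" "b < z" "z < w"
    and "poly f x * poly f y < 0" "poly f y * poly f b < 0"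
    and "poly f b * poly f z < 0" "poly f z * poly f w < 0"
  shows "root_count a b f = 2"
proof -
  obtain y1 y2 y3 y4 where "x < y1" "y1 < y" "y < y2" "y2 < b" "b < y3" "y3 < z" "z < y4" "y4 < w"
    and "poly f y1 = 0" "poly f y2 = 0" "poly f y3 = 0" "poly f y4 = 0"
    using poly_IVT assms by metis
  with assms have "root_count a b f = card {y1, y2}"
    by (intro root_count_eq_card[where T = "{y3, y4}"]) auto
  also have "\<dots> = 2" using \<open>y1 < y\<close> \<open>y < y2\<close> by simp
  finally show ?thesis .
qed

lemma root_count_cubic_sign_changes:
  fixes f :: "real poly"
  assumes "Polynomial.degree f = 3" and "a \<le> x" "x < y" "y \<le> b" "b \<le> u" "u < z" "z < w"
    and "poly f x * poly f y < 0" "poly f u * poly f z < 0" "poly f z * poly f w < 0"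
  shows "root_count a b f = 1"
proof -
  obtain y1 y3 y4 where "x < y1" "y1 < y" "u < y3" "y3 < z" "z < y4" "y4 < w"
    and "poly f y1 = 0" "poly f y3 = 0" "poly f y4 = 0"
    using poly_IVT assms by metis
  with assms have "root_count a b f = card {y1}"
    by (intro root_count_eq_card[where T = "{y3, y4}"]) auto
  thus ?thesis by simp
qed

lemma poly_eq_cofinite:
  fixes f g :: "real poly"
  assumes "finite F" and "\<And>t. t \<notin> F \<Longrightarrow> poly f t = poly g t"
  shows "f = g"
proof (rule ccontr)
  assume "f \<noteq> g"
  hence "finite {t. poly (f - g) t = 0}" by (intro poly_roots_finite) simp
  moreover have "- F \<subseteq> {t. poly (f - g) t = 0}" using assms(2) by auto
  ultimately have "finite (- F)" by (rule finite_subset[rotated])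
  thus False using assms(1) infinite_UNIV_char_0 by (metis Compl_partition2 finite_Un)
qed

section \<open>Determinants and similarity\<close>

lemma det_mat_2x2: "det (mat 2 2 f :: 'a :: comm_ring_1 mat) = f (0,0) * f (1,1) - f (0,1) * f (1,0)"
proof -
  have "det (mat 2 2 f) = (\<Sum>j<2. mat 2 2 f $$ (0,j) * cofactor (mat 2 2 f) 0 j)"
    by (rule laplace_expansion_row) auto
  thus ?thesis by (simp add: cofactor_def mat_delete_def det_single numeral_2_eq_2 lessThan_Suc)
qed

lemma det_bordered_diagonal:
  fixes M :: "'a :: field mat"
  assumes M: "M \<in> carrier_mat (2 + m) (2 + m)"
    and offdiag: "\<And>i j. 2 \<le> i \<Longrightarrow> 2 \<le> j \<Longrightarrow> i < 2 + m \<Longrightarrow> j < 2 + m \<Longrightarrow> i \<noteq> j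
      \<Longrightarrow> M $$ (i,j) = 0"
    and diag: "\<And>i. 2 \<le> i \<Longrightarrow> i < 2 + m \<Longrightarrow> M $$ (i,i) \<noteq> 0"
  defines "S i j \<equiv> M $$ (i,j) - (\<Sum>k<m. M $$ (i,k+2) * M $$ (k+2,j) / M $$ (k+2,k+2))"
  shows "det M = (\<Prod>k<m. M $$ (k+2,k+2)) * (S 0 0 * S 1 1 - S 0 1 * S 1 0)"
proof -
  define A where "A = mat 2 2 (\<lambda>(i,j). M $$ (i,j))"
  define B where "B = mat 2 m (\<lambda>(i,j). M $$ (i,j+2))"
  define C where "C = mat m 2 (\<lambda>(i,j). M $$ (i+2,j))"
  define D where "D = mat m m (\<lambda>(i,j). M $$ (i+2,j+2))"
  define E where "E = mat m 2 (\<lambda>(k,j). - M $$ (k+2,j) / M $$ (k+2,k+2))"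
  define N where "N = four_block_mat (1\<^sub>m 2) (0\<^sub>m 2 m) E (1\<^sub>m m)"
  have cA: "A \<in> carrier_mat 2 2" and cB: "B \<in> carrier_mat 2 m" and cC: "C \<in> carrier_mat m 2"
    and cD: "D \<in> carrier_mat m m" and cE: "E \<in> carrier_mat m 2"
    by (auto simp: A_def B_def C_def D_def E_def)
  have "\<And>i. \<not> i < 2 \<Longrightarrow> Suc (Suc (i - 2)) = i" by arith
  hence blocks: "M = four_block_mat A B C D"
    using M by (intro eq_matI) (auto simp: A_def B_def C_def D_def)
  have cN: "N \<in> carrier_mat (2+m) (2+m)" unfolding N_def using cE by auto
  have detN: "det N = 1" unfolding N_def
    by (subst det_four_block_mat_upper_right_zero[of _ 2 _ m]) (use cE in auto)
  have DE: "D * E = - C"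
  proof (rule eq_matI)
    fix i j assume "i < dim_row (- C)" "j < dim_col (- C)"
    hence i: "i < m" and j: "j < 2" using cC by auto
    have "(D * E) $$ (i,j) = (\<Sum>k<m. D $$ (i,k) * E $$ (k,j))"
      using i j cD cE by (simp add: scalar_prod_def lessThan_atLeast0)
    also have "\<dots> = D $$ (i,i) * E $$ (i,j)"
      using i offdiag by (subst sum.remove[of _ i]) (auto simp: D_def intro!: sum.neutral)
    also have "\<dots> = - C $$ (i,j)" using i j diag[of "i+2"] by (simp add: C_def D_def E_def)
    finally show "(D * E) $$ (i,j) = (- C) $$ (i,j)" using i j cC by simp
  qed (use cC cD cE in auto)
  have "M * N = four_block_mat (A + B * E) B (C + D * E) D"
    unfolding blocks N_def
    by (subst mult_four_block_mat[OF cA cB cC cD one_carrier_mat zero_carrier_mat cE one_carrier_mat])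
       (use cA cB cC cD cE in auto)
  also have "C + D * E = 0\<^sub>m m 2" unfolding DE using cC by (intro eq_matI) auto
  finally have MN: "M * N = four_block_mat (A + B * E) B (0\<^sub>m m 2) D" .
  have "det M = det (M * N)" using det_mult[OF M cN] detN by simp
  also have "\<dots> = det (A + B * E) * det D"
    unfolding MN by (rule det_four_block_mat_lower_left_zero) (use cA cB cD cE in auto)
  finally have det_M: "det M = det (A + B * E) * det D" .
  have "det D = prod_list (diag_mat D)"
    by (rule det_upper_triangular[OF _ cD]) (use offdiag in \<open>auto simp: D_def upper_triangular_def\<close>)
  also have "\<dots> = (\<Prod>k<m. M $$ (k+2,k+2))"
    unfolding prod_list_diag_prod using cD by (simp add: D_def lessThan_atLeast0)
  finally have det_D: "det D = (\<Prod>k<m. M $$ (k+2,k+2))" .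
  have schur: "A + B * E = mat 2 2 (\<lambda>(i,j). S i j)"
  proof (rule eq_matI)
    fix i j assume "i < dim_row (mat 2 2 (\<lambda>(i,j). S i j))" "j < dim_col (mat 2 2 (\<lambda>(i,j). S i j))"
    hence i: "i < 2" and j: "j < 2" by auto
    have "(B * E) $$ (i,j) = (\<Sum>k<m. B $$ (i,k) * E $$ (k,j))"
      using i j cB cE by (simp add: scalar_prod_def lessThan_atLeast0)
    also have "\<dots> = - (\<Sum>k<m. M $$ (i,k+2) * M $$ (k+2,j) / M $$ (k+2,k+2))"
      by (simp add: B_def E_def i j sum_negf[symmetric])
    finally show "(A + B * E) $$ (i,j) = mat 2 2 (\<lambda>(i,j). S i j) $$ (i,j)"
      using i j cA cB cE by (simp add: A_def S_def)
  qed (use cA cB cE in auto)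
  show ?thesis unfolding det_M det_D schur det_mat_2x2 by simp
qed

lemma similar_mat_permute:
  fixes M :: "'a :: field mat"
  assumes M: "M \<in> carrier_mat n n" and f: "bij_betw f {..<n} {..<n}"
  shows "similar_mat (mat n n (\<lambda>(i,j). M $$ (f i, f j))) M"
proof -
  define P :: "'a mat" where "P = mat n n (\<lambda>(i,k). if k = f i then 1 else 0)"
  define Q :: "'a mat" where "Q = mat n n (\<lambda>(k,j). if k = f j then 1 else 0)"
  have cP: "P \<in> carrier_mat n n" and cQ: "Q \<in> carrier_mat n n" by (auto simp: P_def Q_def)
  have fn: "f i < n" if "i < n" for i using f that by (auto simp: bij_betw_def)
  have f_eq: "f i = f j \<longleftrightarrow> i = j" if "i < n" "j < n" for i j
    using f that by (auto simp: bij_betw_def inj_on_eq_iff)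
  have row: "(P * X) $$ (i,j) = X $$ (f i, j)" if "X \<in> carrier_mat n n" "i < n" "j < n" for X i j
  proof -
    have "(P * X) $$ (i,j) = (\<Sum>k<n. P $$ (i,k) * X $$ (k,j))"
      using that cP by (simp add: scalar_prod_def lessThan_atLeast0)
    also have "\<dots> = (\<Sum>k<n. if k = f i then X $$ (k,j) else 0)"
      by (rule sum.cong) (auto simp: P_def that)
    also have "\<dots> = X $$ (f i, j)" using fn[OF that(2)] by simp
    finally show ?thesis .
  qed
  have col: "(X * Q) $$ (i,j) = X $$ (i, f j)" if "X \<in> carrier_mat n n" "i < n" "j < n" for X i j
  proof -
    have "(X * Q) $$ (i,j) = (\<Sum>k<n. X $$ (i,k) * Q $$ (k,j))"
      using that cQ by (simp add: scalar_prod_def lessThan_atLeast0)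
    also have "\<dots> = (\<Sum>k<n. if k = f j then X $$ (i,k) else 0)"
      by (rule sum.cong) (auto simp: Q_def that)
    also have "\<dots> = X $$ (i, f j)" using fn[OF that(3)] by simp
    finally show ?thesis .
  qed
  have PQ: "P * Q = 1\<^sub>m n"
  proof (rule eq_matI)
    fix i j assume "i < dim_row (1\<^sub>m n :: 'a mat)" "j < dim_col (1\<^sub>m n :: 'a mat)"
    hence i: "i < n" and j: "j < n" by auto
    have "(P * Q) $$ (i,j) = Q $$ (f i, j)" by (rule row[OF cQ i j])
    thus "(P * Q) $$ (i,j) = 1\<^sub>m n $$ (i,j)" using i j fn[OF i] f_eq[OF i j] by (simp add: Q_def)
  qed (use cP cQ in auto)
  have QP: "Q * P = 1\<^sub>m n" by (rule mat_mult_left_right_inverse[OF cP cQ PQ])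
  have permuted: "mat n n (\<lambda>(i,j). M $$ (f i, f j)) = P * M * Q"
  proof (rule eq_matI)
    fix i j assume "i < dim_row (P * M * Q)" "j < dim_col (P * M * Q)"
    hence i: "i < n" and j: "j < n" using cP cQ by auto
    have "(P * M * Q) $$ (i,j) = (P * M) $$ (i, f j)" by (rule col[OF mult_carrier_mat[OF cP M] i j])
    also have "\<dots> = M $$ (f i, f j)" by (rule row[OF M i fn[OF j]])
    finally show "mat n n (\<lambda>(i,j). M $$ (f i, f j)) $$ (i,j) = (P * M * Q) $$ (i,j)" using i j by simp
  qed (use cP cQ in auto)
  show ?thesis by (rule similar_matI[of _ _ P Q n]) (use cP cQ M PQ QP permuted in auto)
qed

section \<open>Laplacian spectra of isomorphic graphs\<close>

lemma laplacian_carrier: "laplacian n A \<in> carrier_mat n n"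
  unfolding laplacian_def by auto

lemma char_poly_laplacian_nonzero: "char_poly (laplacian n A) \<noteq> 0"
  using degree_monic_char_poly[OF laplacian_carrier, of n A] by auto

lemma lap_mult_closed_eq_root_count:
  "lap_mult_closed n A a b = root_count a b (char_poly (laplacian n A))"
  unfolding lap_mult_closed_def using sum_order_eq_root_count[OF char_poly_laplacian_nonzero] .

lemma char_poly_laplacian_graph_iso:
  assumes "graph_iso n A B"
  shows "char_poly (laplacian n A) = char_poly (laplacian n B)"
proof -
  obtain f where f: "bij_betw f {..<n} {..<n}"
    and adj: "\<And>i j. i < n \<Longrightarrow> j < n \<Longrightarrow> A i j \<longleftrightarrow> B (f i) (f j)"
    using assms unfolding graph_iso_def by blast
  have fn: "f i < n" if "i < n" for i using f that by (auto simp: bij_betw_def)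
  have f_eq: "f i = f j \<longleftrightarrow> i = j" if "i < n" "j < n" for i j
    using f that by (auto simp: bij_betw_def inj_on_eq_iff)
  have deg: "degree n A i = degree n B (f i)" if i: "i < n" for i
  proof -
    have "{k. k < n \<and> B (f i) k} = f ` {k. k < n \<and> A i k}"
      using f adj[OF i] fn by (auto simp: bij_betw_def image_iff) (metis imageE lessThan_iff)
    moreover have "inj_on f {k. k < n \<and> A i k}"
      using f by (auto simp: bij_betw_def intro: inj_on_subset)
    ultimately show ?thesis unfolding degree_def by (simp add: card_image)
  qed
  have "laplacian n A = mat n n (\<lambda>(i,j). laplacian n B $$ (f i, f j))"
    by (intro eq_matI) (auto simp: laplacian_def fn f_eq deg adj)
  hence "similar_mat (laplacian n A) (laplacian n B)"
    using similar_mat_permute[OF laplacian_carrier f] by simp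
  thus ?thesis by (rule char_poly_similar)
qed

lemma lap_mult_closed_graph_iso:
  "graph_iso n A B \<Longrightarrow> lap_mult_closed n A a b = lap_mult_closed n B a b"
  unfolding lap_mult_closed_def by (simp add: char_poly_laplacian_graph_iso)

section \<open>Blow-ups and binary stars\<close>

lemma ex_bij_betw_class_preserving:
  assumes "finite X" "finite Y" and same_card: "\<And>c. card {x\<in>X. \<sigma> x = c} = card {y\<in>Y. \<tau> y = c}"
  shows "\<exists>f. bij_betw f X Y \<and> (\<forall>x\<in>X. \<tau> (f x) = \<sigma> x)"
proof -
  have "\<forall>c. \<exists>g. bij_betw g {x\<in>X. \<sigma> x = c} {y\<in>Y. \<tau> y = c}"
    using assms by (auto intro!: finite_same_card_bij)
  then obtain g where g: "\<And>c. bij_betw (g c) {x\<in>X. \<sigma> x = c} {y\<in>Y. \<tau> y = c}" by metis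
  define f where "f x = g (\<sigma> x) x" for x
  have f_class: "f x \<in> Y \<and> \<tau> (f x) = \<sigma> x" if "x \<in> X" for x
    using bij_betwE[OF g[of "\<sigma> x"]] that by (auto simp: f_def)
  have "inj_on f X"
  proof (rule inj_onI)
    fix x x' assume x: "x \<in> X" and x': "x' \<in> X" and "f x = f x'"
    moreover from this have "\<sigma> x = \<sigma> x'" using f_class by metis
    ultimately show "x = x'"
      using bij_betw_imp_inj_on[OF g[of "\<sigma> x"]] by (auto simp: f_def inj_on_def)
  qed
  moreover have "Y \<subseteq> f ` X"
  proof
    fix y assume "y \<in> Y"
    hence "y \<in> g (\<tau> y) ` {x\<in>X. \<sigma> x = \<tau> y}" using bij_betw_imp_surj_on[OF g[of "\<tau> y"]] by auto
    then obtain x where "x \<in> X" "\<sigma> x = \<tau> y" "y = g (\<tau> y) x" by auto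
    hence "x \<in> X" "y = f x" by (simp_all add: f_def)
    thus "y \<in> f ` X" by blast
  qed
  ultimately show ?thesis using f_class by (auto simp: bij_betw_def)
qed

lemma graph_iso_blowup:
  assumes "\<And>c. card {x\<in>{..<n}. \<sigma> x = c} = card {y\<in>{..<n}. \<tau> y = c}"
    and "\<And>x y. x < n \<Longrightarrow> y < n \<Longrightarrow> A x y \<longleftrightarrow> R (\<sigma> x) (\<sigma> y)"
    and "\<And>x y. x < n \<Longrightarrow> y < n \<Longrightarrow> B x y \<longleftrightarrow> R (\<tau> x) (\<tau> y)"
  shows "graph_iso n A B"
proof -
  obtain f where f: "bij_betw f {..<n} {..<n}" and preserves: "\<And>x. x < n \<Longrightarrow> \<tau> (f x) = \<sigma> x"
    using ex_bij_betw_class_preserving[OF _ _ assms(1)] by auto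
  have "f x < n" if "x < n" for x using f that by (auto simp: bij_betw_def)
  thus ?thesis unfolding graph_iso_def using f preserves assms(2,3) by metis
qed

definition bstar_class :: "nat \<Rightarrow> nat \<Rightarrow> nat \<Rightarrow> nat" where
  "bstar_class p q x = (if x < 2 then x else if x < q + 2 then 2 else if x < q + p + 2 then 3 else 4)"

text \<open>\<open>B(p, q, r)\<close> is the blow-up of \<open>B(1, 1, 1)\<close>, whose vertices
  \<open>0, 1, 2, 3, 4\<close> are \<open>u, v, w\<^sub>1, u\<^sub>1, v\<^sub>1\<close>, replacing
  the last three by independent sets of sizes \<open>q, p, r\<close>.\<close>
lemma binary_star_blowup:
  "x < p + q + r + 2 \<Longrightarrow> y < p + q + r + 2 \<Longrightarrow>
    binary_star p q r c x y \<longleftrightarrow> binary_star 1 1 1 c (bstar_class p q x) (bstar_class p q y)"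
  unfolding binary_star_def bstar_dir_def bstar_class_def by auto

lemma card_bstar_class:
  "card {x\<in>{..<p + q + r + 2}. bstar_class p q x = c} =
    (if c < 2 then 1 else if c = 2 then q else if c = 3 then p else if c = 4 then r else 0)"
proof -
  have "{x\<in>{..<p + q + r + 2}. bstar_class p q x = c} =
    (if c < 2 then {c} else if c = 2 then {2..<q+2} else if c = 3 then {q+2..<q+p+2}
     else if c = 4 then {q+p+2..<q+p+r+2} else {})"
    by (auto simp: bstar_class_def)
  thus ?thesis by simp
qed

section \<open>The characteristic polynomial of a binary star\<close>

lemma degree_binary_star:
  assumes "x < p + q + r + 2"
  shows "degree (p + q + r + 2) (binary_star p q r c) x =
    (if x = 0 then q + p + of_bool c else if x = 1 then q + r + of_bool c
     else if x < q + 2 then 2 else 1)"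
proof -
  have "{k. k < p + q + r + 2 \<and> binary_star p q r c x k} =
    (if x = 0 then {2..<q+p+2} \<union> (if c then {1} else {})
     else if x = 1 then {2..<q+2} \<union> {q+p+2..<q+p+r+2} \<union> (if c then {0} else {})
     else if x < q + 2 then {0, 1} else if x < q + p + 2 then {0} else {1})"
    using assms by (auto simp: binary_star_def bstar_dir_def)
  moreover have "card ({2..<q+2} \<union> {q+p+2..<q+p+r+2}) = q + r"
    by (subst card_Un_disjoint) auto
  ultimately show ?thesis unfolding degree_def by (auto simp: card_Un_disjoint)
qed

text \<open>\<open>t\<close> times this quartic is the determinant of the Schur complement of the leaf block in
  \<open>t I - L\<close> for \<open>B(p, q, r)\<close> (\<open>c = 0\<close>) or \<open>B'(p, q, r)\<close> (\<open>c = 1\<close>), with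
  the denominators \<open>(t - 1)\<^sup>2 (t - 2)\<close> cleared; see \<open>bstar_quartic_schur\<close>.\<close>
definition bstar_quartic :: "real \<Rightarrow> real \<Rightarrow> real \<Rightarrow> real \<Rightarrow> real poly" where
  "bstar_quartic p q r c = [: (q + 2*c)*(p+q+r+2),
     -(2 + 2*p + 6*q + 2*r + 10*c + 2*p*r + 2*p*q + 3*p*c + 2*q*r + 2*q^2 + 4*q*c + 3*r*c),
     5 + 3*p + 6*q + 3*r + 8*c + p*r + p*q + p*c + q*r + q^2 + 2*q*c + r*c,
     -(4 + p + 2*q + r + 2*c), 1 :]"

text \<open>With \<open>p, q, r\<close> written as \<open>v (t - 1), u (t - 2), w (t - 1)\<close> the identity
  becomes polynomial.\<close>
lemma bstar_quartic_schur_poly: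
  fixes t u v w c :: real
  shows "((t - (u*(t-2) + v*(t-1) + c) - (u + v)) * (t - (u*(t-2) + w*(t-1) + c) - (u + w))
      - (c - u)\<^sup>2) * ((t-1)\<^sup>2 * (t-2)) = t * poly (bstar_quartic (v*(t-1)) (u*(t-2)) (w*(t-1)) c) t"
  unfolding bstar_quartic_def by (simp add: algebra_simps power2_eq_square)

lemma bstar_quartic_schur:
  fixes t p q r c :: real
  assumes "t \<noteq> 1" "t \<noteq> 2"
  shows "((t - (q + p + c) - (q / (t-2) + p / (t-1))) * (t - (q + r + c) - (q / (t-2) + r / (t-1)))
      - (c - q / (t-2))\<^sup>2) * ((t-1)\<^sup>2 * (t-2)) = t * poly (bstar_quartic p q r c) t"
proof -
  have "p = (p / (t-1)) * (t-1)" "q = (q / (t-2)) * (t-2)" "r = (r / (t-1)) * (t-1)"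
    using assms by auto
  then show ?thesis using bstar_quartic_schur_poly[of t "q / (t-2)" "p / (t-1)" c "r / (t-1)"] by metis
qed

lemma sum_lessThan_add: "(\<Sum>k<a + (b::nat). g k) = (\<Sum>k<a. g k) + (\<Sum>k<b. g (a + k))"
  by (induction b) (auto simp: add.assoc)

lemma prod_lessThan_add: "(\<Prod>k<a + (b::nat). g k) = (\<Prod>k<a. g k) * (\<Prod>k<b. g (a + k))"
  by (induction b) (auto simp: mult.assoc)

lemma sum_three_blocks:
  "(\<Sum>k<q + p + r. if k < q then x else if k < q + p then y else z) =
    of_nat q * x + of_nat p * y + (of_nat r * z :: 'a :: comm_semiring_1)"
  by (simp add: sum_lessThan_add)

lemma neg_char_matrix_laplacian:
  assumes "i < n" "j < n" "\<not> A i i"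
  shows "(- char_matrix (laplacian n A) t) $$ (i,j) =
    (if i = j then t - real (degree n A i) else 0) + (if A i j then 1 else 0)"
  using assms by (auto simp: char_matrix_def laplacian_def)

lemma neg_char_matrix_binary_star:
  fixes p q r :: nat and c :: bool and t :: real
  defines "M \<equiv> - char_matrix (laplacian (p + q + r + 2) (binary_star p q r c)) t"
  shows "M \<in> carrier_mat (2 + (q + p + r)) (2 + (q + p + r))"
    and "\<And>k. k < q + p + r \<Longrightarrow> M $$ (k+2,k+2) = (if k < q then t - 2 else t - 1)"
    and "\<And>i j. 2 \<le> i \<Longrightarrow> 2 \<le> j \<Longrightarrow> i < 2 + (q + p + r) \<Longrightarrow> j < 2 + (q + p + r) \<Longrightarrow> i \<noteq> j
      \<Longrightarrow> M $$ (i,j) = 0"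
    and "\<And>i k. i < 2 \<Longrightarrow> k < q + p + r \<Longrightarrow>
      M $$ (i,k+2) = (if k < q then 1 else if k < q + p then of_bool (i = 0) else of_bool (i = 1))"
    and "\<And>i k. i < 2 \<Longrightarrow> k < q + p + r \<Longrightarrow> M $$ (k+2,i) = M $$ (i,k+2)"
    and "M $$ (0,0) = t - (real q + real p + of_bool c)" "M $$ (1,1) = t - (real q + real r + of_bool c)"
    and "M $$ (0,1) = of_bool c" "M $$ (1,0) = of_bool c"
proof -
  let ?n = "p + q + r + 2"
  show "M \<in> carrier_mat (2 + (q + p + r)) (2 + (q + p + r))"
    using laplacian_carrier[of ?n "binary_star p q r c"] unfolding M_def char_matrix_def by auto
  have M: "M $$ (i,j) = (if i = j then t - real (degree ?n (binary_star p q r c) i) else 0)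
      + (if binary_star p q r c i j then 1 else 0)" if "i < ?n" "j < ?n" for i j
    unfolding M_def using that
    by (rule neg_char_matrix_laplacian) (auto simp: binary_star_def bstar_dir_def)
  note deg = degree_binary_star[of _ p q r c]
  show "M $$ (k+2,k+2) = (if k < q then t - 2 else t - 1)" if "k < q + p + r" for k
    using that M[of "k+2" "k+2"] deg[of "k+2"] by (simp add: binary_star_def bstar_dir_def)
  show "M $$ (i,j) = 0" if "2 \<le> i" "2 \<le> j" "i < 2 + (q + p + r)" "j < 2 + (q + p + r)" "i \<noteq> j" for i j
    using that by (simp add: M) (auto simp: binary_star_def bstar_dir_def)
  show "M $$ (i,k+2) = (if k < q then 1 else if k < q + p then of_bool (i = 0) else of_bool (i = 1))"
    "M $$ (k+2,i) = M $$ (i,k+2)" if "i < 2" "k < q + p + r" for i k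
    using that by (simp_all add: M) (auto simp: binary_star_def bstar_dir_def)
  show "M $$ (0,0) = t - (real q + real p + of_bool c)" "M $$ (1,1) = t - (real q + real r + of_bool c)"
    "M $$ (0,1) = of_bool c" "M $$ (1,0) = of_bool c"
    using M[of 0 0] M[of 1 1] M[of 0 1] M[of 1 0] deg[of 0] deg[of 1]
    by (simp_all add: binary_star_def bstar_dir_def)
qed

lemma poly_char_poly_binary_star:
  fixes t :: real
  assumes t: "t \<noteq> 1" "t \<noteq> 2"
  shows "poly (char_poly (laplacian (p + q + r + 2) (binary_star p q r c))) t * ((t-1)\<^sup>2 * (t-2)) =
    t * (t-1) ^ (p+r) * (t-2) ^ q * poly (bstar_quartic p q r (of_bool c)) t"
proof -
  define M where "M = - char_matrix (laplacian (p + q + r + 2) (binary_star p q r c)) t"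
  note entries = neg_char_matrix_binary_star[where p = p and q = q and r = r and c = c and t = t, folded M_def]
  have diag_nz: "M $$ (i,i) \<noteq> 0" if "2 \<le> i" "i < 2 + (q + p + r)" for i
  proof -
    have k: "i - 2 < q + p + r" "i - 2 + 2 = i" using that by auto
    from entries(2)[OF k(1)] show ?thesis unfolding k(2) using t by auto
  qed
  have schur_sum: "(\<Sum>k<q+p+r. M $$ (i,k+2) * M $$ (k+2,j) / M $$ (k+2,k+2)) =
      q / (t-2) + of_bool (i = 0 \<and> j = 0) * p / (t-1) + of_bool (i = 1 \<and> j = 1) * r / (t-1)"
    if "i < 2" "j < 2" for i j
  proof -
    define g where "g k = (if k < q then 1 / (t-2) else if k < q+p then of_bool (i = 0 \<and> j = 0) / (t-1)
      else of_bool (i = 1 \<and> j = 1) / (t-1))" for k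
    have "M $$ (i,k+2) * M $$ (k+2,j) / M $$ (k+2,k+2) = g k" if k: "k < q + p + r" for k
      using entries(4,5)[OF \<open>i < 2\<close> k] entries(4,5)[OF \<open>j < 2\<close> k] entries(2)[OF k] \<open>i < 2\<close> \<open>j < 2\<close>
      unfolding g_def by auto
    hence "(\<Sum>k<q+p+r. M $$ (i,k+2) * M $$ (k+2,j) / M $$ (k+2,k+2)) = (\<Sum>k<q+p+r. g k)"
      by (intro sum.cong) auto
    thus ?thesis unfolding g_def by (simp add: sum_three_blocks)
  qed
  have "(\<Prod>k<q+p+r. M $$ (k+2,k+2)) = (\<Prod>k<q+(p+r). if k < q then t-2 else t-1)"
    by (rule prod.cong) (auto simp: entries(2)[simplified])
  hence leaves: "(\<Prod>k<q+p+r. M $$ (k+2,k+2)) = (t-2) ^ q * (t-1) ^ (p+r)"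
    by (simp add: prod_lessThan_add)
  let ?schur = "(t - (real q + real p + of_bool c) - (q / (t-2) + p / (t-1)))
    * (t - (real q + real r + of_bool c) - (q / (t-2) + r / (t-1))) - (of_bool c - q / (t-2))\<^sup>2"
  have "poly (char_poly (laplacian (p + q + r + 2) (binary_star p q r c))) t = det M"
    unfolding M_def by (rule char_poly_matrix[OF laplacian_carrier])
  also have "\<dots> = (t-2) ^ q * (t-1) ^ (p+r) * ?schur"
    using det_bordered_diagonal[OF entries(1,3) diag_nz] leaves entries(6-9)
      schur_sum[of 0 0] schur_sum[of 0 1] schur_sum[of 1 0] schur_sum[of 1 1]
    by (simp add: power2_eq_square)
  finally have "poly (char_poly (laplacian (p + q + r + 2) (binary_star p q r c))) t * ((t-1)\<^sup>2 * (t-2))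
      = (t-2) ^ q * (t-1) ^ (p+r) * (?schur * ((t-1)\<^sup>2 * (t-2)))"
    by (simp only: mult.assoc)
  thus ?thesis unfolding bstar_quartic_schur[OF t] by (simp add: ac_simps)
qed

lemma char_poly_binary_star:
  "char_poly (laplacian (p + q + r + 2) (binary_star p q r c)) * ([:-1,1:]\<^sup>2 * [:-2,1:]) =
    [:0,1:] * [:-1,1:] ^ (p+r) * [:-2,1:] ^ q * bstar_quartic p q r (of_bool c)"
proof (rule poly_eq_cofinite[of "{1, 2}"])
  fix t :: real assume "t \<notin> {1, 2}"
  thus "poly (char_poly (laplacian (p + q + r + 2) (binary_star p q r c)) * ([:-1,1:]\<^sup>2 * [:-2,1:])) t =
      poly ([:0,1:] * [:-1,1:] ^ (p+r) * [:-2,1:] ^ q * bstar_quartic p q r (of_bool c)) t"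
    using poly_char_poly_binary_star[of t p q r c] by (simp add: algebra_simps)
qed simp

lemma degree_bstar_quartic: "Polynomial.degree (bstar_quartic p q r c) = 4"
  by (simp add: bstar_quartic_def)

lemma bstar_quartic_nonzero: "bstar_quartic p q r c \<noteq> 0"
  by (simp add: bstar_quartic_def)

lemma lap_mult_binary_star:
  "lap_mult_closed (p + q + r + 2) (binary_star p q r c) 0 2 + 2 =
    p + q + r + root_count 0 2 (bstar_quartic p q r (of_bool c))"
proof -
  let ?T = "char_poly (laplacian (p + q + r + 2) (binary_star p q r c))"
  let ?H = "bstar_quartic p q r (of_bool c)"
  define X0 X1 X2 :: "real poly" where "X0 = [:0,1:]" and "X1 = [:-1,1:]" and "X2 = [:-2,1:]"
  have nz: "?T \<noteq> 0" "?H \<noteq> 0" "X0 \<noteq> 0" "X1 \<noteq> 0" "X2 \<noteq> 0"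
    by (simp_all add: char_poly_laplacian_nonzero bstar_quartic_nonzero X0_def X1_def X2_def)
  have "root_count 0 2 X0 = 1" "root_count 0 2 X1 = 1" "root_count 0 2 X2 = 1"
    using root_count_linear[of 0 2 0] root_count_linear[of 0 2 1] root_count_linear[of 0 2 2]
    by (simp_all add: X0_def X1_def X2_def)
  note counts = this root_count_mult root_count_power
  have "root_count 0 2 (?T * (X1\<^sup>2 * X2)) = root_count 0 2 ?T + 3"
    using nz by (simp add: counts)
  moreover have "root_count 0 2 (X0 * X1 ^ (p+r) * X2 ^ q * ?H) = 1 + (p + r) + q + root_count 0 2 ?H"
    using nz by (simp add: counts)
  ultimately show ?thesis
    using char_poly_binary_star[of p q r c] unfolding X0_def X1_def X2_def
    by (simp add: lap_mult_closed_eq_root_count)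
qed

section \<open>Roots of the quartic factor in [0, 2]\<close>

lemma root_count_bstar_quartic_no_edge:
  fixes p q r :: nat
  assumes "1 \<le> q" "1 \<le> r" "r \<le> p"
  shows "root_count 0 2 (bstar_quartic p q r 0) = 2"
proof (rule root_count_quartic_sign_changes
    [where x = 0 and y = 1 and z = "real p + real q + 1" and w = "real p + real q + real r + 3"])
  let ?H = "bstar_quartic p q r 0"
  have r: "real p \<ge> 1" "real q \<ge> 1" "real r \<ge> 1" "real r \<le> real p" using assms by auto
  have "poly ?H 0 = real q * (real p + real q + real r + 2)"
    by (simp add: bstar_quartic_def algebra_simps)
  hence s0: "poly ?H 0 > 0" using r by simp
  have "poly ?H 1 = - (real p * real r)"
    by (simp add: bstar_quartic_def algebra_simps power2_eq_square)
  hence s1: "poly ?H 1 < 0" using r by simp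
  have "poly ?H 2 = real q * (real p + real q + real r - 2)"
    by (simp add: bstar_quartic_def algebra_simps power2_eq_square)
  hence s2: "poly ?H 2 > 0" using r by simp
  have "poly ?H (real p + real q + 1) = - (real q * (real p - real r + real q))"
    by (simp add: bstar_quartic_def algebra_simps power2_eq_square)
  hence s3: "poly ?H (real p + real q + 1) < 0" using r by simp
  have "poly ?H (real p + real q + real r + 3) =
     real (12*q + 15*p*q + 3*q^2 + 15*q*r + 22*p + 22*r + 12 + 12*r^2 + 12*p^2 + 10*p^2*r + 10*p*r^2
       + 4*p^2*q + 2*p*q^2 + 2*q^2*r + 4*q*r^2 + 27*p*r + 2*r^3 + 12*p*q*r + 2*p^3 + 2*p^2*q*r
       + 2*p^2*r^2 + p*q^2*r + 2*p*q*r^2 + p*r^3 + p^3*r)"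
    by (simp add: bstar_quartic_def algebra_simps power2_eq_square power3_eq_cube)
  hence s4: "poly ?H (real p + real q + real r + 3) > 0" by (simp only: of_nat_0_less_iff)
  show "poly ?H 0 * poly ?H 1 < 0" using s0 s1 by (rule mult_pos_neg)
  show "poly ?H 1 * poly ?H 2 < 0" using s1 s2 by (rule mult_neg_pos)
  show "poly ?H 2 * poly ?H (real p + real q + 1) < 0" using s2 s3 by (rule mult_pos_neg)
  show "poly ?H (real p + real q + 1) * poly ?H (real p + real q + real r + 3) < 0" using s3 s4 by (rule mult_neg_pos)
qed (use assms in \<open>auto simp: degree_bstar_quartic\<close>)

lemma root_count_bstar_quartic_edge:
  fixes p q r :: nat
  assumes "1 \<le> p" "1 \<le> q" "1 \<le> r"
  shows "root_count 0 2 (bstar_quartic p q r 1) = 2"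
proof (rule root_count_quartic_sign_changes
    [where x = 0 and y = 1 and z = "real p + real q + 2" and w = "real p + real q + real r + 3"])
  let ?H = "bstar_quartic p q r 1"
  have r: "real p \<ge> 1" "real q \<ge> 1" "real r \<ge> 1" using assms by auto
  have "poly ?H 0 = (real q + 2) * (real p + real q + real r + 2)"
    by (simp add: bstar_quartic_def algebra_simps)
  hence s0: "poly ?H 0 > 0" using r by simp
  have "poly ?H 1 = - (real p * real r)"
    by (simp add: bstar_quartic_def algebra_simps power2_eq_square)
  hence s1: "poly ?H 1 < 0" using r by simp
  have "poly ?H 2 = real q * (real p + real q + real r)"
    by (simp add: bstar_quartic_def algebra_simps power2_eq_square)
  hence s2: "poly ?H 2 > 0" using r by simp
  have "poly ?H (real p + real q + 2) = - (real p * real r)"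
    by (simp add: bstar_quartic_def algebra_simps power2_eq_square)
  hence s3: "poly ?H (real p + real q + 2) < 0" using r by simp
  have "poly ?H (real p + real q + real r + 3) =
     real (4*q + 4 + 6*p*q + 8*p + q^2 + 6*q*r + 8*r + 13*p*r + 5*r^2 + 5*p^2 + 7*p^2*r + 8*p*q*r
       + 7*p*r^2 + 2*p^2*q + p*q^2 + 2*q*r^2 + r^3 + q^2*r + p^3 + 2*p^2*q*r + 2*p^2*r^2
       + p*q^2*r + 2*p*q*r^2 + p*r^3 + p^3*r)"
    by (simp add: bstar_quartic_def algebra_simps power2_eq_square power3_eq_cube)
  hence s4: "poly ?H (real p + real q + real r + 3) > 0" by (simp only: of_nat_0_less_iff)
  show "poly ?H 0 * poly ?H 1 < 0" using s0 s1 by (rule mult_pos_neg)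
  show "poly ?H 1 * poly ?H 2 < 0" using s1 s2 by (rule mult_neg_pos)
  show "poly ?H 2 * poly ?H (real p + real q + 2) < 0" using s2 s3 by (rule mult_pos_neg)
  show "poly ?H (real p + real q + 2) * poly ?H (real p + real q + real r + 3) < 0"
    using s3 s4 by (rule mult_neg_pos)
qed (use assms in \<open>auto simp: degree_bstar_quartic\<close>)

lemma root_count_bstar_quartic_edge_q0:
  fixes p r :: nat
  assumes "2 \<le> p * r"
  shows "root_count 0 2 (bstar_quartic p 0 r 1) = 2"
proof -
  have pr: "1 \<le> p" "1 \<le> r" using assms by (auto simp: Suc_le_eq intro!: gr0I)
  define C :: "real poly" where
    "C = [: -(2 + real p + real r), 5 + 2*real p + 2*real r + real p*real r, -(4 + real p + real r), 1 :]"
  have factor: "bstar_quartic p 0 r 1 = [:-2,1:] * C"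
    by (simp add: bstar_quartic_def C_def algebra_simps power2_eq_square)
  have r: "real p \<ge> 1" "real r \<ge> 1" "real p * real r \<ge> 2"
    using assms pr by (auto simp flip: of_nat_mult)
  have s0: "poly C 0 < 0" using r by (simp add: C_def)
  have s1: "poly C 1 > 0" using r by (simp add: C_def algebra_simps)
  have "(real p - 1) * (real r - 1) \<ge> 0" using r by simp
  hence s2: "poly C 2 > 0" using r by (simp add: C_def algebra_simps)
  have "poly C (real p + 2) = - real r" by (simp add: C_def algebra_simps power2_eq_square)
  hence s3: "poly C (real p + 2) < 0" using r by simp
  have "poly C (real p + real r + 3) = real (4 + 4*r + 4*p + 5*p*r + r^2 + p^2 + p*r^2 + p^2*r)"
    by (simp add: C_def algebra_simps power2_eq_square power3_eq_cube)
  hence s4: "poly C (real p + real r + 3) > 0" by (simp only: of_nat_0_less_iff)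
  have C_count: "root_count 0 2 C = 1"
  proof (rule root_count_cubic_sign_changes
      [where x = 0 and y = 1 and u = 2 and z = "real p + 2" and w = "real p + real r + 3"])
    show "poly C 0 * poly C 1 < 0" using s0 s1 by (rule mult_neg_pos)
    show "poly C 2 * poly C (real p + 2) < 0" using s2 s3 by (rule mult_pos_neg)
    show "poly C (real p + 2) * poly C (real p + real r + 3) < 0" using s3 s4 by (rule mult_neg_pos)
  qed (use r in \<open>auto simp: C_def\<close>)
  have "C \<noteq> 0" by (simp add: C_def)
  show ?thesis unfolding factor root_count_linear_mult[OF \<open>C \<noteq> 0\<close>] C_count by simp
qed

lemma root_count_bstar_quartic_no_edge_r0:
  fixes p q :: nat
  assumes "1 \<le> p" "1 \<le> q" "3 \<le> p + q"
  shows "root_count 0 2 (bstar_quartic p q 0 0) = 2"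
proof -
  define C :: "real poly" where
    "C = [: -(real q * (2 + real p + real q)), 2 + 4*real q + 2*real p + real p*real q + real q*real q,
      -(3 + 2*real q + real p), 1 :]"
  have factor: "bstar_quartic p q 0 0 = [:-1,1:] * C"
    by (simp add: bstar_quartic_def C_def algebra_simps power2_eq_square)
  have r: "real p \<ge> 1" "real q \<ge> 1" "real p + real q \<ge> 3" using assms by auto
  have s0: "poly C 0 < 0" using r by (simp add: C_def)
  have s1: "poly C 1 > 0" using r by (simp add: C_def algebra_simps)
  have "poly C 2 = real q * (real p + real q - 2)" by (simp add: C_def algebra_simps)
  hence s2: "poly C 2 > 0" using r by simp
  have "poly C (real p + real q + 1) = - real q" by (simp add: C_def algebra_simps power2_eq_square)
  hence s3: "poly C (real p + real q + 1) < 0" using r by simp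
  have "poly C (real p + real q + 2) = real (p*q + 2*p + p^2)"
    by (simp add: C_def algebra_simps power2_eq_square power3_eq_cube)
  hence s4: "poly C (real p + real q + 2) > 0" using assms by (simp only: of_nat_0_less_iff)
  have C_count: "root_count 0 2 C = 1"
  proof (rule root_count_cubic_sign_changes
      [where x = 0 and y = 1 and u = 2 and z = "real p + real q + 1" and w = "real p + real q + 2"])
    show "poly C 0 * poly C 1 < 0" using s0 s1 by (rule mult_neg_pos)
    show "poly C 2 * poly C (real p + real q + 1) < 0" using s2 s3 by (rule mult_pos_neg)
    show "poly C (real p + real q + 1) * poly C (real p + real q + 2) < 0" using s3 s4 by (rule mult_neg_pos)
  qed (use r in \<open>auto simp: C_def\<close>)
  have "C \<noteq> 0" by (simp add: C_def)
  show ?thesis unfolding factor root_count_linear_mult[OF \<open>C \<noteq> 0\<close>] C_count by simp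
qed

lemma root_count_linear_factors:
  "root_count a b (\<Prod>c\<leftarrow>cs. [:-c, 1:]) = length (filter (\<lambda>c. a \<le> c \<and> c \<le> b) cs)"
proof (induction cs)
  case (Cons c cs)
  have "(\<Prod>c\<leftarrow>cs. [:-c, 1:]) \<noteq> 0" by (auto simp: prod_list_zero_iff)
  thus ?case using Cons.IH by (simp add: root_count_linear_mult del: mult_pCons_left)
qed (simp add: root_count_def)

lemma root_count_bstar_quartic_edge_r0:
  fixes p q :: nat
  shows "root_count 0 2 (bstar_quartic p q 0 1) = 2 \<longleftrightarrow> 1 \<le> q"
proof -
  have factor: "bstar_quartic p q 0 1 = (\<Prod>c\<leftarrow>[1, 1, real q + 2, real p + real q + 2]. [:-c, 1:])"
    by (subst poly_eq_poly_eq_iff[symmetric]) (simp add: fun_eq_iff bstar_quartic_def algebra_simps power2_eq_square)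
  show ?thesis unfolding factor root_count_linear_factors by simp
qed

lemma root_count_bstar_quartic_no_edge_p0_r0:
  fixes q :: nat
  shows "root_count 0 2 (bstar_quartic 0 q 0 0) = 2 \<longleftrightarrow> 3 \<le> q"
proof -
  have factor: "bstar_quartic 0 q 0 0 = (\<Prod>c\<leftarrow>[1, 1, real q, real q + 2]. [:-c, 1:])"
    by (subst poly_eq_poly_eq_iff[symmetric]) (simp add: fun_eq_iff bstar_quartic_def algebra_simps power2_eq_square)
  show ?thesis unfolding factor root_count_linear_factors by simp
qed

text \<open>The exceptional graphs \<open>B'(1, 0, 1)\<close> and \<open>B(1, 1, 0)\<close> are both the path
  \<open>P\<^sub>4\<close>; there the root \<open>2 - \<surd>2\<close> of the factor \<open>t\<^sup>2 - 4 t + 2\<close> is a third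
  root in \<open>[0, 2]\<close>.\<close>
lemma root_count_bstar_quartic_P4:
  "3 \<le> root_count 0 2 (bstar_quartic 1 0 1 1)" "3 \<le> root_count 0 2 (bstar_quartic 1 1 0 0)"
proof -
  obtain x :: real where "0 < x" "x < 1" "poly [:2, -4, 1:] x = 0"
    using poly_IVT[of 0 1 "[:2, -4, 1:]"] by auto
  hence "card {x} \<le> root_count 0 2 [:2, -4, 1:]"
    by (intro card_le_root_count) auto
  hence quadratic: "1 \<le> root_count 0 2 [:2, -4, 1:]" by simp
  have factor: "bstar_quartic 1 0 1 1 = [:-2, 1:] * ([:-2, 1:] * [:2, -4, 1:])"
    "bstar_quartic 1 1 0 0 = [:-1, 1:] * ([:-2, 1:] * [:2, -4, 1:])"
    by (subst poly_eq_poly_eq_iff[symmetric], simp add: fun_eq_iff bstar_quartic_def algebra_simps power2_eq_square)+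
  have nz: "[:2, -4, 1:] \<noteq> (0 :: real poly)" "[:-2, 1:] * [:2, -4, 1:] \<noteq> (0 :: real poly)" by simp_all
  show "3 \<le> root_count 0 2 (bstar_quartic 1 0 1 1)" "3 \<le> root_count 0 2 (bstar_quartic 1 1 0 0)"
    unfolding factor root_count_linear_mult[OF nz(2)] root_count_linear_mult[OF nz(1)] using quadratic by simp_all
qed

lemma root_count_bstar_quartic_eq_2_iff:
  fixes p q r :: nat
  assumes "r \<le> p" and "1 \<le> q \<or> c"
  shows "root_count 0 2 (bstar_quartic p q r (of_bool c)) = 2 \<longleftrightarrow>
    (\<not> c \<and> 1 \<le> q \<and> 3 \<le> p + q + r) \<or> (c \<and> q = 0 \<and> 2 \<le> p * r) \<or> (c \<and> 1 \<le> q)"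
proof (cases c)
  case True
  have P4: "p = 1 \<and> r = 1" if "1 \<le> r" "\<not> 2 \<le> p * r"
  proof -
    have "p \<le> p * r" using that by simp
    thus ?thesis using that \<open>r \<le> p\<close> by linarith
  qed
  consider "1 \<le> q" "1 \<le> r" | "r = 0" | "q = 0" "2 \<le> p * r" | "q = 0" "p = 1" "r = 1"
    using P4 by (cases "r = 0"; cases "q = 0"; cases "2 \<le> p * r") auto
  thus ?thesis using True
  proof cases
    case 1 thus ?thesis using True root_count_bstar_quartic_edge[of p q r] \<open>r \<le> p\<close> by simp
  next
    case 2 thus ?thesis using True root_count_bstar_quartic_edge_r0[of p q] by simp
  next
    case 3 thus ?thesis using True root_count_bstar_quartic_edge_q0[of p r] by simp
  next
    case 4 thus ?thesis using True root_count_bstar_quartic_P4(1) by simp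
  qed
next
  case False
  hence "1 \<le> q" using assms(2) by simp
  consider "1 \<le> r" | "r = 0" "p = 0" | "r = 0" "1 \<le> p" "3 \<le> p + q" | "r = 0" "p = 1" "q = 1"
    using \<open>1 \<le> q\<close> by linarith
  thus ?thesis
  proof cases
    case 1 thus ?thesis using False root_count_bstar_quartic_no_edge[of q r p] assms by simp
  next
    case 2 thus ?thesis using False root_count_bstar_quartic_no_edge_p0_r0[of q] \<open>1 \<le> q\<close> by auto
  next
    case 3 thus ?thesis using False root_count_bstar_quartic_no_edge_r0[of p q] \<open>1 \<le> q\<close> by simp
  next
    case 4 thus ?thesis using False root_count_bstar_quartic_P4(2) by simp
  qed
qed

section \<open>Graphs with independence number n - 2\<close>

lemma graph_iso_binary_star_two_cover:
  fixes A :: "nat \<Rightarrow> nat \<Rightarrow> bool" and n u v :: nat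
  defines "S \<equiv> {..<n} - {u, v}"
  defines "p \<equiv> card {s\<in>S. A s u \<and> \<not> A s v}" and "q \<equiv> card {s\<in>S. A s u \<and> A s v}"
    and "r \<equiv> card {s\<in>S. \<not> A s u \<and> A s v}"
  assumes "sgraph n A" and uv: "u < n" "v < n" "u \<noteq> v"
    and indep: "\<And>x y. x \<in> S \<Longrightarrow> y \<in> S \<Longrightarrow> \<not> A x y"
    and cover: "\<And>s. s \<in> S \<Longrightarrow> A s u \<or> A s v"
  shows "n = p + q + r + 2 \<and> graph_iso n A (binary_star p q r (A u v))"
proof -
  have sym: "A x y \<longleftrightarrow> A y x" and irrefl: "\<not> A x x" for x y
    using \<open>sgraph n A\<close> unfolding sgraph_def by blast+
  define \<sigma> where "\<sigma> x = (if x = u then 0 else if x = v then 1 else if A x u \<and> A x v then 2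
    else if A x u then 3 else 4 :: nat)" for x
  have classes: "{x\<in>{..<n}. \<sigma> x = c} =
    (if c = 0 then {u} else if c = 1 then {v} else if c = 2 then {s\<in>S. A s u \<and> A s v}
     else if c = 3 then {s\<in>S. A s u \<and> \<not> A s v} else if c = 4 then {s\<in>S. \<not> A s u \<and> A s v} else {})"
    for c using uv cover by (auto simp: \<sigma>_def S_def)
  let ?W = "{s\<in>S. A s u \<and> A s v}" and ?U = "{s\<in>S. A s u \<and> \<not> A s v}"
    and ?V = "{s\<in>S. \<not> A s u \<and> A s v}"
  have "{..<n} = {u, v} \<union> (?W \<union> ?U \<union> ?V)"
    using uv cover by (auto simp: S_def)
  hence "n = card ({u, v} \<union> (?W \<union> ?U \<union> ?V))" by (metis card_lessThan)
  also have "\<dots> = card {u, v} + (card (?W \<union> ?U) + card ?V)"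
    by (subst card_Un_disjoint; auto simp: S_def)+
  also have "card (?W \<union> ?U) = card ?W + card ?U"
    by (rule card_Un_disjoint) (auto simp: S_def)
  finally have n: "n = p + q + r + 2" using \<open>u \<noteq> v\<close> unfolding p_def q_def r_def by simp
  have "card {x\<in>{..<n}. \<sigma> x = c} = card {y\<in>{..<p + q + r + 2}. bstar_class p q y = c}" for c
    unfolding classes card_bstar_class by (simp add: p_def q_def r_def)
  moreover have "A x y \<longleftrightarrow> binary_star 1 1 1 (A u v) (\<sigma> x) (\<sigma> y)" if "x < n" "y < n" for x y
  proof -
    have cover_v: "A v s" if "s < n" "s \<noteq> u" "s \<noteq> v" "\<not> A u s" for s
      using cover[of s] that sym by (auto simp: S_def)
    show ?thesis using that indep cover sym irrefl
      by (auto simp: \<sigma>_def S_def binary_star_def bstar_dir_def intro: cover_v)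
  qed
  ultimately have "graph_iso n A (binary_star p q r (A u v))"
    using binary_star_blowup[of _ p q r] n by (intro graph_iso_blowup) auto
  with n show ?thesis by simp
qed

lemma ex_maximum_independent_set: "\<exists>S. independent_set n A S \<and> card S = indep_num n A"
proof -
  let ?F = "{card S | S. independent_set n A S}"
  have "?F \<subseteq> {..n}"
    by (auto simp: independent_set_def intro!: card_mono[of "{..<n}", simplified])
  hence "finite ?F" by (rule finite_subset) simp
  moreover have "independent_set n A {}" unfolding independent_set_def by simp
  hence "?F \<noteq> {}" by blast
  ultimately have "Max ?F \<in> ?F" by (rule Max_in)
  thus ?thesis unfolding indep_num_def by auto
qed

context
  fixes n :: nat and A :: "nat \<Rightarrow> nat \<Rightarrow> bool" and u v :: nat
  assumes sg: "sgraph n A" and conn: "connected_graph n A" and uv: "u < n" "v < n" "u \<noteq> v"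
    and indep: "independent_set n A ({..<n} - {u, v})"
begin

lemma independent_complement_adjacent:
  assumes "s \<in> {..<n} - {u, v}"
  shows "A s u \<or> A s v"
proof -
  have "A\<^sup>*\<^sup>* s u" using conn assms uv unfolding connected_graph_def by blast
  then obtain y where "A s y" using assms by (cases rule: converse_rtranclpE) auto
  moreover have "y < n" "y \<notin> {..<n} - {u, v}"
    using \<open>A s y\<close> sg indep assms unfolding sgraph_def independent_set_def by blast+
  ultimately show ?thesis by auto
qed

text \<open>Otherwise the neighbours of \<open>u\<close> together with \<open>u\<close> would form a component
  not containing \<open>v\<close>.\<close>
lemma independent_complement_linked: "A u v \<or> (\<exists>s\<in>{..<n} - {u, v}. A s u \<and> A s v)"
proof (rule ccontr)
  assume not_linked: "\<not> ?thesis"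
  let ?X = "insert u {s\<in>{..<n} - {u, v}. A s u}"
  have "y \<in> ?X" if "A\<^sup>*\<^sup>* u y" for y
    using that
  proof (induction rule: rtranclp_induct)
    case (step y z)
    have "z < n" "A z y" "z \<noteq> y" using step.hyps(2) sg unfolding sgraph_def by blast+
    show ?case
    proof (cases "y = u")
      case True
      thus ?thesis using \<open>z < n\<close> \<open>A z y\<close> \<open>z \<noteq> y\<close> not_linked sg unfolding sgraph_def by auto
    next
      case False
      hence "y \<in> {..<n} - {u, v}" "A y u" using step.IH by auto
      hence "z \<notin> {..<n} - {u, v}" using step.hyps(2) indep unfolding independent_set_def by blast
      thus ?thesis using \<open>z < n\<close> step.hyps(2) \<open>y \<in> {..<n} - {u, v}\<close> \<open>A y u\<close> not_linked by auto
    qed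
  qed simp
  moreover have "A\<^sup>*\<^sup>* u v" using conn uv unfolding connected_graph_def by blast
  ultimately have "v \<in> ?X" by blast
  thus False using \<open>u \<noteq> v\<close> by blast
qed

end

lemma ex_binary_star_iso:
  assumes sg: "sgraph n A" and conn: "connected_graph n A" and indep_num: "indep_num n A + 2 = n"
  shows "\<exists>p q r c. r \<le> p \<and> n = p + q + r + 2 \<and> (1 \<le> q \<or> c) \<and> graph_iso n A (binary_star p q r c)"
proof -
  obtain S where S: "independent_set n A S" "card S = indep_num n A"
    using ex_maximum_independent_set by blast
  hence "S \<subseteq> {..<n}" unfolding independent_set_def by blast
  hence "card ({..<n} - S) = n - card S" by (simp add: card_Diff_subset finite_subset)
  hence "card ({..<n} - S) = 2" using S(2) indep_num by simp
  then obtain u v where uv_def: "{..<n} - S = {u, v}" and "u \<noteq> v" unfolding card_2_iff by blast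
  have uv: "u < n" "v < n" "u \<noteq> v" using uv_def \<open>u \<noteq> v\<close> by auto
  let ?S = "{..<n} - {u, v}"
  have "S = ?S" using uv_def \<open>S \<subseteq> {..<n}\<close> by auto
  hence indep: "independent_set n A ?S" using S(1) by simp
  hence indep': "\<And>x y. x \<in> ?S \<Longrightarrow> y \<in> ?S \<Longrightarrow> \<not> A x y" unfolding independent_set_def by blast
  have cover: "\<And>s. s \<in> ?S \<Longrightarrow> A s u \<or> A s v"
    using independent_complement_adjacent[OF sg conn uv indep] .
  define U W V where "U = {s\<in>?S. A s u \<and> \<not> A s v}" and "W = {s\<in>?S. A s u \<and> A s v}"
    and "V = {s\<in>?S. \<not> A s u \<and> A s v}"
  have "1 \<le> card W \<or> A u v"
    using independent_complement_linked[OF sg conn uv indep] by (auto simp: W_def card_gt_0_iff Suc_le_eq)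
  moreover have "n = card U + card W + card V + 2 \<and> graph_iso n A (binary_star (card U) (card W) (card V) (A u v))"
    using graph_iso_binary_star_two_cover[OF sg uv indep' cover] unfolding U_def W_def V_def .
  moreover have "n = card V + card W + card U + 2 \<and> graph_iso n A (binary_star (card V) (card W) (card U) (A u v))"
  proof -
    have swap: "{..<n} - {v, u} = ?S" "{s\<in>?S. A s v \<and> \<not> A s u} = V" "{s\<in>?S. A s v \<and> A s u} = W"
      "{s\<in>?S. \<not> A s v \<and> A s u} = U" "A v u = A u v"
      using sg unfolding U_def V_def W_def sgraph_def by auto
    have "\<And>s. s \<in> ?S \<Longrightarrow> A s v \<or> A s u" using cover by blast
    from graph_iso_binary_star_two_cover[where n = n and A = A and u = v and v = u, unfolded swap,
        OF sg uv(2,1) uv(3)[symmetric] indep' this]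
    show ?thesis .
  qed
  ultimately show ?thesis by (cases "card V \<le> card U") (metis add.commute nat_le_linear)+
qed

lemma lap_mult_closed_binary_star_iff:
  assumes "graph_iso n A (binary_star p q r c)" and "n = p + q + r + 2" and "r \<le> p" and "1 \<le> q \<or> c"
  shows "lap_mult_closed n A 0 2 = n - 2 \<longleftrightarrow>
    (\<not> c \<and> 1 \<le> q \<and> 3 \<le> p + q + r) \<or> (c \<and> q = 0 \<and> 2 \<le> p * r) \<or> (c \<and> 1 \<le> q)"
  using lap_mult_closed_graph_iso[OF assms(1)] lap_mult_binary_star[of p q r c]
    root_count_bstar_quartic_eq_2_iff[OF assms(3,4)] assms(2) by auto

theorem mainTheorem8:
  fixes n :: nat and A :: "nat \<Rightarrow> nat \<Rightarrow> bool"
  assumes "sgraph n A" and "connected_graph n A" and "indep_num n A + 2 = n"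
  shows "lap_mult_closed n A 0 (real n - real (indep_num n A)) = indep_num n A \<longleftrightarrow>
    (\<exists>p q r. p \<ge> r \<and> n = p + q + r + 2 \<and>
      ((q \<ge> 1 \<and> p + q + r \<ge> 3 \<and> graph_iso n A (binary_star p q r False)) \<or>
       (p * r \<ge> 2 \<and> graph_iso n A (binary_star p 0 r True) \<and> q = 0) \<or>
       (q \<ge> 1 \<and> graph_iso n A (binary_star p q r True))))"
proof -
  have "real n - real (indep_num n A) = 2" "indep_num n A = n - 2" using assms(3) by auto
  moreover have "lap_mult_closed n A 0 2 = n - 2 \<longleftrightarrow>
    (\<exists>p q r. p \<ge> r \<and> n = p + q + r + 2 \<and>
      ((q \<ge> 1 \<and> p + q + r \<ge> 3 \<and> graph_iso n A (binary_star p q r False)) \<or>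
       (p * r \<ge> 2 \<and> graph_iso n A (binary_star p 0 r True) \<and> q = 0) \<or>
       (q \<ge> 1 \<and> graph_iso n A (binary_star p q r True))))" (is "_ \<longleftrightarrow> ?classified")
  proof
    obtain p q r c where "graph_iso n A (binary_star p q r c)" "n = p + q + r + 2" "r \<le> p" "1 \<le> q \<or> c"
      using ex_binary_star_iso[OF assms] by blast
    moreover assume "lap_mult_closed n A 0 2 = n - 2"
    ultimately show ?classified
      using lap_mult_closed_binary_star_iff by (intro exI[of _ p] exI[of _ q] exI[of _ r]) (cases c; auto)
  next
    assume ?classified
    then obtain p q r c where "graph_iso n A (binary_star p q r c)" "n = p + q + r + 2" "r \<le> p"
      and "(\<not> c \<and> 1 \<le> q \<and> 3 \<le> p + q + r) \<or> (c \<and> q = 0 \<and> 2 \<le> p * r) \<or> (c \<and> 1 \<le> q)"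
      by (metis add.right_neutral)
    thus "lap_mult_closed n A 0 2 = n - 2" using lap_mult_closed_binary_star_iff by blast
  qed
  ultimately show ?thesis by simp
qed

end
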